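(* For all disjoint subsets $X_i, X_j \subseteq A$: if $X_i \leadsto X_j$, then for every $S' \subseteq S$, $$\Psi_{X_i \cup X_j}(S') = (\Psi_{X_i} \oslash \Psi_{X_j})\big(\Omega_{X_i \cup X_j}(S')\big).$$
   Context: Let $A$ be a finite set of agents. For each $a \in A$ let $S_a$ be a nonempty finite set, and $S = \prod_{a \in A} S_a$ the set of states. For each $a \in A$ let $\to_a \subseteq S \times S$ be a relation that is either empty or left-total, such that whenever $s \to_a s'$, either $s = s'$ or $s$ and $s'$ differ only in the $a$-component. For $X \subseteq A$ let $\to_X = \bigcup_{a \in X} \to_a$ and $\to_X^*$ its reflexive-transitive closure; for $T \subseteq S$, $(T \to_X) = \{ t' : \exists t \in T,\ t \to_X t'\}$. Orbit operator: $\Omega_X(S') = \{ s' : \exists s \in S',\ s \to_X^* s'\}$. Equilibria operator: $\Psi_X(S') = \{ s \in \Omega_X(S') : \forall s' \in S,\ s \to_X^* s' \implies s' \to_X^* s \}$. $M$-relation: $X \leadsto Y$ iff for every $S' \subseteq S$, with $T = \Psi_X(\Psi_{X \cup Y}(S'))$, one has $(T \to_Y) \subseteq T$. Composition operator: for $X, Y \subseteq A$, let $\rightleftharpoons_X$ be the equivalence relation on $S$ given by $s \rightleftharpoons_X s'$ iff $s \to_X^* s'$ and $s' \to_X^* s$; $[s]_X$ denotes the class of $s$ and $[S']_X = \{[s]_X : s \in S'\}$. On classes define $c \Rightarrow_Y c'$ iff there exist $s \in c$, $s' \in c'$ with $s \to_Y s'$, and let $\Rightarrow_Y^*$ be its reflexive-transitive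 closure. For $S'' \subseteq S$ let $[\widetilde{\Psi}_Y]_X(S'') = \{ e \in [S'']_X : \{e' : e \Rightarrow_Y^* e'\} \subseteq [S'']_X \text{ and } \forall e' \in [S]_X,\ e \Rightarrow_Y^* e' \implies e' \Rightarrow_Y^* e \}$, and for a set $E$ of subsets of $S$ let $\mathsf{Flatten}(E) = \bigcup_{e \in E} e$. Then $(\Psi_X \oslash \Psi_Y)(S'') = \mathsf{Flatten}\big([\widetilde{\Psi}_Y]_X(\Psi_X(S''))\big)$. *)

theory Defs
  imports "HOL-Library.FuncSet"
begin

text \<open>States are functions from agents to local values; the state space is
  S = PiE A Sa. R a is the transition relation of agent a.\<close>

definition steps :: "('a \<Rightarrow> ('s \<times> 's) set) \<Rightarrow> 'a set \<Rightarrow> ('s \<times> 's) set" where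
  "steps R X = (\<Union>a\<in>X. R a)"

definition reach :: "('a \<Rightarrow> ('s \<times> 's) set) \<Rightarrow> 'a set \<Rightarrow> ('s \<times> 's) set" where
  "reach R X = (steps R X)\<^sup>*"

definition post :: "('a \<Rightarrow> ('s \<times> 's) set) \<Rightarrow> 'a set \<Rightarrow> 's set \<Rightarrow> 's set" where
  "post R X T = {t'. \<exists>t\<in>T. (t, t') \<in> steps R X}"

definition Omega :: "('a \<Rightarrow> ('s \<times> 's) set) \<Rightarrow> 'a set \<Rightarrow> 's set \<Rightarrow> 's set" where
  "Omega R X S' = {s'. \<exists>s\<in>S'. (s, s') \<in> reach R X}"

definition Psi :: "'s set \<Rightarrow> ('a \<Rightarrow> ('s \<times> 's) set) \<Rightarrow> 'a set \<Rightarrow> 's set \<Rightarrow> 's set" where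
  "Psi S R X S' = {s \<in> Omega R X S'. \<forall>s'\<in>S. (s, s') \<in> reach R X \<longrightarrow> (s', s) \<in> reach R X}"

definition Mrel :: "'s set \<Rightarrow> ('a \<Rightarrow> ('s \<times> 's) set) \<Rightarrow> 'a set \<Rightarrow> 'a set \<Rightarrow> bool" where
  "Mrel S R X Y = (\<forall>S'. S' \<subseteq> S \<longrightarrow>
      (let T = Psi S R X (Psi S R (X \<union> Y) S') in post R Y T \<subseteq> T))"

definition cls :: "('a \<Rightarrow> ('s \<times> 's) set) \<Rightarrow> 'a set \<Rightarrow> 's \<Rightarrow> 's set" where
  "cls R X s = {s'. (s, s') \<in> reach R X \<and> (s', s) \<in> reach R X}"

definition classes :: "('a \<Rightarrow> ('s \<times> 's) set) \<Rightarrow> 'a set \<Rightarrow> 's set \<Rightarrow> 's set set" where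
  "classes R X S' = cls R X ` S'"

definition cstep :: "'s set \<Rightarrow> ('a \<Rightarrow> ('s \<times> 's) set) \<Rightarrow> 'a set \<Rightarrow> 'a set \<Rightarrow> ('s set \<times> 's set) set" where
  "cstep S R X Y = {(c, c'). c \<in> classes R X S \<and> c' \<in> classes R X S \<and>
      (\<exists>s\<in>c. \<exists>s'\<in>c'. (s, s') \<in> steps R Y)}"

definition tildePsi :: "'s set \<Rightarrow> ('a \<Rightarrow> ('s \<times> 's) set) \<Rightarrow> 'a set \<Rightarrow> 'a set \<Rightarrow> 's set \<Rightarrow> 's set set" where
  "tildePsi S R X Y S'' = {e \<in> classes R X S''.
      {e'. (e, e') \<in> (cstep S R X Y)\<^sup>*} \<subseteq> classes R X S'' \<and>
      (\<forall>e'\<in>classes R X S. (e, e') \<in> (cstep S R X Y)\<^sup>* \<longrightarrow> (e', e) \<in> (cstep S R X Y)\<^sup>*)}"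

definition Flatten :: "'s set set \<Rightarrow> 's set" where
  "Flatten E = (\<Union>e\<in>E. e)"

definition comp :: "'s set \<Rightarrow> ('a \<Rightarrow> ('s \<times> 's) set) \<Rightarrow> 'a set \<Rightarrow> 'a set \<Rightarrow> 's set \<Rightarrow> 's set" where
  "comp S R X Y S'' = Flatten (tildePsi S R X Y (Psi S R X S''))"

end

theory Submission
  imports Defs
begin

text \<open>An (X \<union> Y)-equilibrium s of the orbit is an X-equilibrium by the M-relation, and so
  is every state it reaches. Hence the X-classes reachable from [s]_X by class steps are the
  classes of states reachable from s, all in \<Psi>_X of the orbit, and each of them leads back to
  [s]_X because s is an (X \<union> Y)-equilibrium. Conversely, if [s]_X is a class-level
  Y-equilibrium inside \<Psi>_X of the orbit, every (X \<union> Y)-path from s runs through classes of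
  X-equilibria, so it is mirrored by a path of classes, which leads back to [s]_X and thus to s.\<close>

text \<open>s lies in a bottom strongly connected component of the X-transitions inside S.\<close>
definition terminal :: "'s set \<Rightarrow> ('a \<Rightarrow> ('s \<times> 's) set) \<Rightarrow> 'a set \<Rightarrow> 's \<Rightarrow> bool" where
  "terminal S R X s \<longleftrightarrow> (\<forall>u\<in>S. (s, u) \<in> reach R X \<longrightarrow> (u, s) \<in> reach R X)"

lemma Psi_eq_terminal: "Psi S R X S' = {s \<in> Omega R X S'. terminal S R X s}"
  unfolding Psi_def terminal_def by simp

lemma reach_refl [simp]: "(s, s) \<in> reach R X"
  by (simp add: reach_def)

lemma reach_trans: "(a, b) \<in> reach R X \<Longrightarrow> (b, c) \<in> reach R X \<Longrightarrow> (a, c) \<in> reach R X"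
  unfolding reach_def by (rule rtrancl_trans)

lemma steps_imp_reach: "(a, b) \<in> steps R X \<Longrightarrow> (a, b) \<in> reach R X"
  unfolding reach_def by blast

lemma steps_Un: "steps R (X \<union> Y) = steps R X \<union> steps R Y"
  unfolding steps_def by auto

lemma post_Un: "post R (X \<union> Y) T = post R X T \<union> post R Y T"
  unfolding post_def steps_Un by blast

lemma reach_mono: "X \<subseteq> Z \<Longrightarrow> (a, b) \<in> reach R X \<Longrightarrow> (a, b) \<in> reach R Z"
  unfolding reach_def steps_def by (erule rtrancl_mono[THEN subsetD, rotated]) blast

lemma reach_induct [consumes 1, case_names refl step]:
  assumes "(a, b) \<in> reach R X" "P a"
    "\<And>y z. (a, y) \<in> reach R X \<Longrightarrow> (y, z) \<in> steps R X \<Longrightarrow> P y \<Longrightarrow> P z"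
  shows "P b"
  using assms(1) unfolding reach_def
  by (induction rule: rtrancl_induct) (use assms(2,3) in \<open>auto simp: reach_def\<close>)

lemma reach_closed:
  assumes "\<forall>a\<in>X. R a \<subseteq> S \<times> S" "(s, t) \<in> reach R X" "s \<in> S"
  shows "t \<in> S"
  using assms(2,3) by (induction rule: reach_induct) (use assms(1) in \<open>auto simp: steps_def\<close>)

lemma reach_post_closed:
  assumes "post R X T \<subseteq> T" "(t, u) \<in> reach R X" "t \<in> T"
  shows "u \<in> T"
  using assms(2,3) by (induction rule: reach_induct) (use assms(1) in \<open>auto simp: post_def\<close>)

lemma Omega_reach_closed: "s \<in> Omega R X S' \<Longrightarrow> (s, t) \<in> reach R X \<Longrightarrow> t \<in> Omega R X S'"
  unfolding Omega_def by (blast intro: reach_trans)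

lemma Omega_subset:
  assumes "\<forall>a\<in>X. R a \<subseteq> S \<times> S" "S' \<subseteq> S"
  shows "Omega R X S' \<subseteq> S"
  using assms reach_closed[OF assms(1)] unfolding Omega_def by blast

lemma Omega_Omega_eq:
  assumes "X \<subseteq> Z"
  shows "Omega R X (Omega R Z S') = Omega R Z S'"
proof
  show "Omega R X (Omega R Z S') \<subseteq> Omega R Z S'"
    unfolding Omega_def[of R X] by (auto intro: Omega_reach_closed reach_mono[OF assms])
  show "Omega R Z S' \<subseteq> Omega R X (Omega R Z S')"
    unfolding Omega_def[of R X] by (blast intro: reach_refl)
qed

lemma terminal_reach:
  "terminal S R X s \<Longrightarrow> (s, b) \<in> reach R X \<Longrightarrow> terminal S R X b"
  unfolding terminal_def by (blast intro: reach_trans)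

lemma Psi_reach_closed:
  assumes "s \<in> Psi S R X S'" "(s, t) \<in> reach R X"
  shows "t \<in> Psi S R X S'"
  using assms Omega_reach_closed[OF _ assms(2)] terminal_reach[OF _ assms(2)] unfolding Psi_eq_terminal by blast

lemma Psi_post_closed: "post R X (Psi S R X S') \<subseteq> Psi S R X S'"
  unfolding post_def by (blast intro: Psi_reach_closed steps_imp_reach)

text \<open>In a finite transition system a state with the fewest successors among those reachable
  from s is terminal.\<close>
lemma terminal_exists:
  assumes "finite S" "\<forall>a\<in>X. R a \<subseteq> S \<times> S" "s \<in> S"
  shows "\<exists>t. (s, t) \<in> reach R X \<and> terminal S R X t"
proof -
  define succs where "succs t = {u. (t, u) \<in> reach R X}" for t
  obtain t where st: "(s, t) \<in> reach R X"
    and t_min: "\<And>y. (s, y) \<in> reach R X \<Longrightarrow> card (succs t) \<le> card (succs y)"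
    using ex_has_least_nat[of "\<lambda>t. (s, t) \<in> reach R X" s "\<lambda>t. card (succs t)"] by auto
  have "(u, t) \<in> reach R X" if "u \<in> S" "(t, u) \<in> reach R X" for u
  proof (rule ccontr)
    assume "(u, t) \<notin> reach R X"
    then have "succs u \<subset> succs t"
      using that(2) unfolding succs_def by (auto intro: reach_trans)
    moreover have "finite (succs t)"
      using reach_closed[OF assms(2) st assms(3)] reach_closed[OF assms(2)] assms(1)
      unfolding succs_def by (blast intro: finite_subset)
    ultimately have "card (succs u) < card (succs t)" by (rule psubset_card_mono[rotated])
    with t_min[OF reach_trans[OF st that(2)]] show False by simp
  qed
  with st show ?thesis unfolding terminal_def by blast
qed

text \<open>The set T of the M-relation is closed under X-steps (as a set of X-equilibria) and under
  Y-steps (by the M-relation); it contains an X-terminal state reached from s, from which s is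
  reachable again.\<close>
lemma Mrel_terminal:
  assumes M: "Mrel S R X Y" and "finite S" and RS: "\<forall>a\<in>X. R a \<subseteq> S \<times> S" and "s \<in> S"
    and s_term: "terminal S R (X \<union> Y) s"
  shows "terminal S R X s"
proof -
  define T where "T = Psi S R X (Psi S R (X \<union> Y) {s})"
  have "post R Y T \<subseteq> T"
    using M \<open>s \<in> S\<close> unfolding Mrel_def T_def Let_def by blast
  moreover have "post R X T \<subseteq> T"
    unfolding T_def by (rule Psi_post_closed)
  ultimately have T_closed: "post R (X \<union> Y) T \<subseteq> T"
    unfolding post_Un by blast
  obtain t where st: "(s, t) \<in> reach R X" and t_term: "terminal S R X t"
    using terminal_exists[OF \<open>finite S\<close> RS \<open>s \<in> S\<close>] by blast
  have "s \<in> Psi S R (X \<union> Y) {s}"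
    using s_term unfolding Psi_eq_terminal Omega_def by auto
  with st t_term have "t \<in> T"
    unfolding T_def Psi_eq_terminal Omega_def by blast
  moreover have "(t, s) \<in> reach R (X \<union> Y)"
    using s_term reach_mono[OF _ st] reach_closed[OF RS st \<open>s \<in> S\<close>]
    unfolding terminal_def by blast
  ultimately have "s \<in> T"
    using T_closed by (blast intro: reach_post_closed)
  then show ?thesis
    unfolding T_def Psi_eq_terminal by blast
qed

lemma cls_self: "s \<in> cls R X s"
  by (simp add: cls_def)

lemma cls_eq_iff: "cls R X a = cls R X b \<longleftrightarrow> b \<in> cls R X a"
proof
  assume "cls R X a = cls R X b"
  then show "b \<in> cls R X a"
    by (simp add: cls_self)
next
  assume "b \<in> cls R X a"
  then have ab: "(a, b) \<in> reach R X" and ba: "(b, a) \<in> reach R X"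
    unfolding cls_def by auto
  show "cls R X a = cls R X b"
    unfolding cls_def
    by (auto intro: reach_trans[OF ab] reach_trans[OF ba] reach_trans[OF _ ab] reach_trans[OF _ ba])
qed

lemma cls_classes_terminal:
  assumes "cls R X y \<in> classes R X P" "\<forall>q\<in>P. terminal S R X q"
  shows "terminal S R X y"
proof -
  obtain q where "q \<in> P" "cls R X q = cls R X y"
    using assms(1) unfolding classes_def by blast
  then have "y \<in> cls R X q"
    by (simp only: cls_eq_iff)
  then have "(q, y) \<in> reach R X"
    by (simp add: cls_def)
  moreover have "terminal S R X q"
    using assms(2) \<open>q \<in> P\<close> by blast
  ultimately show ?thesis
    by (blast intro: terminal_reach)
qed

text \<open>An X-step from an X-terminal state stays inside its class; a Y-step is a class step.\<close>
lemma steps_imp_cstep_rtrancl: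
  assumes "y \<in> S" "z \<in> S" "terminal S R X y" "(y, z) \<in> steps R (X \<union> Y)"
  shows "(cls R X y, cls R X z) \<in> (cstep S R X Y)\<^sup>*"
  using assms(4) unfolding steps_Un
proof
  assume "(y, z) \<in> steps R X"
  then have yz: "(y, z) \<in> reach R X"
    by (rule steps_imp_reach)
  with assms(2,3) have "(z, y) \<in> reach R X"
    unfolding terminal_def by blast
  with yz have "z \<in> cls R X y"
    unfolding cls_def by blast
  then have "cls R X y = cls R X z"
    by (simp only: cls_eq_iff)
  then show ?thesis by simp
next
  assume "(y, z) \<in> steps R Y"
  with assms(1,2) cls_self[of y R X] cls_self[of z R X]
  have "(cls R X y, cls R X z) \<in> cstep S R X Y"
    unfolding cstep_def classes_def by blast
  then show ?thesis by blast
qed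

lemma reach_imp_cstep_rtrancl:
  assumes RS: "\<forall>a\<in>X \<union> Y. R a \<subseteq> S \<times> S" and "b \<in> S"
    and reached_terminal: "\<And>y. (cls R X b, cls R X y) \<in> (cstep S R X Y)\<^sup>* \<Longrightarrow> terminal S R X y"
    and "(b, c) \<in> reach R (X \<union> Y)"
  shows "(cls R X b, cls R X c) \<in> (cstep S R X Y)\<^sup>*"
  using assms(4)
proof (induction rule: reach_induct)
  case refl
  show ?case by simp
next
  case (step y z)
  have "y \<in> S"
    using reach_closed[OF RS step.hyps(1) \<open>b \<in> S\<close>] .
  moreover have "z \<in> S"
    using reach_closed[OF RS steps_imp_reach[OF step.hyps(2)] \<open>y \<in> S\<close>] .
  moreover have "terminal S R X y"
    using reached_terminal[OF step.IH] .
  ultimately have "(cls R X y, cls R X z) \<in> (cstep S R X Y)\<^sup>*"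
    using step.hyps(2) by (rule steps_imp_cstep_rtrancl)
  with step.IH show ?case
    by (rule rtrancl_trans)
qed

lemma cstep_rtrancl_imp_reach:
  assumes "(cls R X a, e) \<in> (cstep S R X Y)\<^sup>*"
  shows "\<exists>b. e = cls R X b \<and> (a, b) \<in> reach R (X \<union> Y)"
  using assms
proof (induction rule: rtrancl_induct)
  case base
  show ?case
    by (intro exI[of _ a]) simp
next
  case (step e e')
  then obtain b where b: "e = cls R X b" "(a, b) \<in> reach R (X \<union> Y)" by blast
  from step.hyps(2) obtain x y where "x \<in> e" "y \<in> e'" and xy: "(x, y) \<in> steps R Y"
    and "e' \<in> classes R X S" unfolding cstep_def by blast
  then obtain u where "e' = cls R X u" "y \<in> cls R X u"
    unfolding classes_def by blast
  then have e': "e' = cls R X y"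
    by (simp only: cls_eq_iff)
  from \<open>x \<in> e\<close> have "(b, x) \<in> reach R X"
    unfolding b(1) cls_def by blast
  then have "(b, x) \<in> reach R (X \<union> Y)"
    by (rule reach_mono[OF Un_upper1])
  moreover have "(x, y) \<in> reach R (X \<union> Y)"
    using xy by (simp add: steps_Un steps_imp_reach)
  ultimately have "(a, y) \<in> reach R (X \<union> Y)"
    using b(2) by (blast intro: reach_trans)
  with e' show ?case by blast
qed

lemma Psi_Omega_Un:
  "Psi S R X (Omega R (X \<union> Y) S') = {s \<in> Omega R (X \<union> Y) S'. terminal S R X s}"
  unfolding Psi_eq_terminal Omega_Omega_eq[OF Un_upper1] ..

lemma comp_subset_Psi_Un:
  assumes RS: "\<forall>a\<in>X \<union> Y. R a \<subseteq> S \<times> S" and "S' \<subseteq> S"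
  shows "comp S R X Y (Omega R (X \<union> Y) S') \<subseteq> Psi S R (X \<union> Y) S'"
proof
  let ?Orb = "Omega R (X \<union> Y) S'"
  let ?P = "Psi S R X ?Orb"
  let ?cstep = "cstep S R X Y"
  fix s assume "s \<in> comp S R X Y ?Orb"
  then obtain e where "s \<in> e" and "e \<in> tildePsi S R X Y ?P"
    unfolding comp_def Flatten_def by blast
  then have "e \<in> classes R X ?P"
    and e_closed: "{e'. (e, e') \<in> ?cstep\<^sup>*} \<subseteq> classes R X ?P"
    and e_term: "\<forall>e'\<in>classes R X S. (e, e') \<in> ?cstep\<^sup>* \<longrightarrow> (e', e) \<in> ?cstep\<^sup>*"
    unfolding tildePsi_def by simp_all
  then obtain p where "p \<in> ?P" "e = cls R X p"
    unfolding classes_def by blast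
  from \<open>s \<in> e\<close> have "(p, s) \<in> reach R X"
    unfolding \<open>e = cls R X p\<close> cls_def by blast
  moreover have "p \<in> ?Orb"
    using \<open>p \<in> ?P\<close> unfolding Psi_Omega_Un by blast
  ultimately have "s \<in> ?Orb"
    by (blast intro: Omega_reach_closed reach_mono[OF Un_upper1])
  then have "s \<in> S"
    using Omega_subset[OF RS \<open>S' \<subseteq> S\<close>] by blast
  from \<open>s \<in> e\<close> have e_eq: "e = cls R X s"
    unfolding \<open>e = cls R X p\<close> by (rule cls_eq_iff[THEN iffD2])
  have reached_terminal: "terminal S R X y" if "(cls R X s, cls R X y) \<in> ?cstep\<^sup>*" for y
  proof (rule cls_classes_terminal)
    show "cls R X y \<in> classes R X ?P"
      using that e_closed unfolding e_eq by blast
    show "\<forall>q\<in>?P. terminal S R X q"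
      unfolding Psi_eq_terminal by blast
  qed
  have "terminal S R (X \<union> Y) s"
    unfolding terminal_def
  proof (intro ballI impI)
    fix u assume "u \<in> S" and su: "(s, u) \<in> reach R (X \<union> Y)"
    have "(e, cls R X u) \<in> ?cstep\<^sup>*"
      unfolding e_eq by (rule reach_imp_cstep_rtrancl[OF RS \<open>s \<in> S\<close> reached_terminal su])
    moreover have "cls R X u \<in> classes R X S"
      unfolding classes_def using \<open>u \<in> S\<close> by blast
    ultimately have "(cls R X u, e) \<in> ?cstep\<^sup>*"
      using e_term by blast
    from cstep_rtrancl_imp_reach[OF this] obtain b
      where "e = cls R X b" "(u, b) \<in> reach R (X \<union> Y)" by blast
    moreover from \<open>s \<in> e\<close> have "(b, s) \<in> reach R (X \<union> Y)"
      unfolding \<open>e = cls R X b\<close> cls_def by (blast intro: reach_mono[OF Un_upper1])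
    ultimately show "(u, s) \<in> reach R (X \<union> Y)"
      by (blast intro: reach_trans)
  qed
  with \<open>s \<in> ?Orb\<close> show "s \<in> Psi S R (X \<union> Y) S'"
    unfolding Psi_eq_terminal by blast
qed

lemma Psi_Un_subset_comp:
  assumes M: "Mrel S R X Y" and "finite S" and RS: "\<forall>a\<in>X \<union> Y. R a \<subseteq> S \<times> S" and "S' \<subseteq> S"
  shows "Psi S R (X \<union> Y) S' \<subseteq> comp S R X Y (Omega R (X \<union> Y) S')"
proof
  let ?Orb = "Omega R (X \<union> Y) S'"
  let ?P = "Psi S R X ?Orb"
  let ?cstep = "cstep S R X Y"
  fix s assume "s \<in> Psi S R (X \<union> Y) S'"
  then have "s \<in> ?Orb" and s_term: "terminal S R (X \<union> Y) s"
    unfolding Psi_eq_terminal by auto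
  have S_closed: "b \<in> S" if "(s, b) \<in> reach R (X \<union> Y)" for b
    using Omega_reach_closed[OF \<open>s \<in> ?Orb\<close> that] Omega_subset[OF RS \<open>S' \<subseteq> S\<close>] by blast
  have reached_in_P: "b \<in> ?P" if sb: "(s, b) \<in> reach R (X \<union> Y)" for b
  proof -
    have "terminal S R X b"
    proof (rule Mrel_terminal[OF M \<open>finite S\<close>])
      show "\<forall>a\<in>X. R a \<subseteq> S \<times> S" using RS by blast
      show "b \<in> S" using S_closed[OF sb] .
      show "terminal S R (X \<union> Y) b" using terminal_reach[OF s_term sb] .
    qed
    with Omega_reach_closed[OF \<open>s \<in> ?Orb\<close> sb] show ?thesis
      unfolding Psi_Omega_Un by blast
  qed
  have reached_terminal: "terminal S R X y"
    if "(cls R X b, cls R X y) \<in> ?cstep\<^sup>*" "(s, b) \<in> reach R (X \<union> Y)" for b y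
  proof (rule cls_classes_terminal)
    from cstep_rtrancl_imp_reach[OF that(1)] obtain b'
      where "cls R X y = cls R X b'" "(b, b') \<in> reach R (X \<union> Y)" by blast
    with reached_in_P[OF reach_trans[OF that(2)]] show "cls R X y \<in> classes R X ?P"
      unfolding classes_def by blast
    show "\<forall>q\<in>?P. terminal S R X q"
      unfolding Psi_eq_terminal by blast
  qed
  have "cls R X s \<in> tildePsi S R X Y ?P"
    unfolding tildePsi_def
  proof (intro CollectI conjI ballI impI subsetI)
    show "cls R X s \<in> classes R X ?P"
      unfolding classes_def using reached_in_P[OF reach_refl] by blast
  next
    fix e' assume "e' \<in> {e'. (cls R X s, e') \<in> ?cstep\<^sup>*}"
    then have "(cls R X s, e') \<in> ?cstep\<^sup>*" by simp
    from cstep_rtrancl_imp_reach[OF this] obtain b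
      where "e' = cls R X b" "(s, b) \<in> reach R (X \<union> Y)" by blast
    with reached_in_P show "e' \<in> classes R X ?P"
      unfolding classes_def by blast
  next
    fix e' assume "(cls R X s, e') \<in> ?cstep\<^sup>*"
    from cstep_rtrancl_imp_reach[OF this] obtain b
      where b: "e' = cls R X b" "(s, b) \<in> reach R (X \<union> Y)" by blast
    with s_term S_closed have bs: "(b, s) \<in> reach R (X \<union> Y)"
      unfolding terminal_def by blast
    have "(cls R X b, cls R X s) \<in> ?cstep\<^sup>*"
      using reached_terminal[OF _ b(2)] by (rule reach_imp_cstep_rtrancl[OF RS S_closed[OF b(2)] _ bs])
    then show "(e', cls R X s) \<in> ?cstep\<^sup>*"
      unfolding b(1) .
  qed
  with cls_self[of s R X] show "s \<in> comp S R X Y ?Orb"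
    unfolding comp_def Flatten_def by blast
qed

theorem lemma2:
  fixes A :: "'a set" and Sa :: "'a \<Rightarrow> 'v set"
    and R :: "'a \<Rightarrow> (('a \<Rightarrow> 'v) \<times> ('a \<Rightarrow> 'v)) set"
    and Xi Xj :: "'a set" and S' :: "('a \<Rightarrow> 'v) set"
  assumes "finite A"
    and "\<forall>a\<in>A. finite (Sa a) \<and> Sa a \<noteq> {}"
    and "\<forall>a\<in>A. R a \<subseteq> (Pi\<^sub>E A Sa) \<times> (Pi\<^sub>E A Sa)"
    and "\<forall>a\<in>A. R a = {} \<or> (\<forall>s\<in>Pi\<^sub>E A Sa. \<exists>s'. (s, s') \<in> R a)"
    and "\<forall>a\<in>A. \<forall>s s'. (s, s') \<in> R a \<longrightarrow> s = s' \<or> (\<forall>b\<in>A. b \<noteq> a \<longrightarrow> s b = s' b)"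
    and "Xi \<subseteq> A" and "Xj \<subseteq> A" and "Xi \<inter> Xj = {}"
    and "Mrel (Pi\<^sub>E A Sa) R Xi Xj"
    and "S' \<subseteq> Pi\<^sub>E A Sa"
  shows "Psi (Pi\<^sub>E A Sa) R (Xi \<union> Xj) S' =
         comp (Pi\<^sub>E A Sa) R Xi Xj (Omega R (Xi \<union> Xj) S')"
proof -
  have "finite (Pi\<^sub>E A Sa)"
    using assms(1,2) by (intro finite_PiE) auto
  moreover have "\<forall>a\<in>Xi \<union> Xj. R a \<subseteq> Pi\<^sub>E A Sa \<times> Pi\<^sub>E A Sa"
    using assms(3,6,7) by blast
  ultimately show ?thesis
    using assms(9,10) by (intro subset_antisym Psi_Un_subset_comp comp_subset_Psi_Un)
qed

end
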